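(* Let $G$ be a finite $p$-group whose commutator subgroup $D(G)$ equals its Frattini subgroup and is elementary abelian, $D(G)\cong(\mathbb Z/p\mathbb Z)^n$ with $n\ge1$. Let $\phi:G/D(G)\to\mathrm{Aut}(D(G))$ be the conjugation action $\phi(y)(g)=s(y)^{-1}gs(y)$ (for any lift $s(y)\in G$ of $y$), and fix an $\mathbb F_p$-basis $g_1,\dots,g_n$ of $D(G)$ in which each $\phi(y)$ is lower unitriangular: $\phi(y)(g_j)=g_j+\sum_{i>j}\ell_{i,j}(y)g_i$ with $\ell_{i,j}(y)\in\mathbb F_p$ (additive notation in $D(G)$). Then the following are equivalent: (1) $\Lambda_i(G)/\Lambda_{i-1}(G)\cong\mathbb Z/p\mathbb Z$ for every $i\in\{1,\dots,n\}$, so that $\{e\}=\Lambda_0(G)\subsetneq\Lambda_1(G)\subsetneq\dots\subsetneq\Lambda_n(G)=D(G)$; (2) for every $i\in\{1,\dots,n\}$, $\Lambda_i(G)$ is the $\mathbb F_p$-span of $g_{n-i+1},\dots,g_n$; (3) $n=1$, or $n\ge2$ and for every $i\in\{1,\dots,n-1\}$ the linear form $\ell_{i+1,i}:G/D(G)\to\mathbb F_p$ is nonzero.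
   Context: For a group $G$, define $\Lambda_0(G)=\{e\}$ and, for $i\ge1$, $\Lambda_i(G)=\pi_{i-1}^{-1}\big(Z(G/\Lambda_{i-1}(G))\cap D(G/\Lambda_{i-1}(G))\big)$ where $\pi_{i-1}:G\to G/\Lambda_{i-1}(G)$ is the canonical map, $Z$ denotes the center and $D$ the commutator subgroup. This gives an ascending chain of characteristic subgroups of $G$ contained in $D(G)$. Each $\ell_{i+1,i}$ is a group homomorphism $G/D(G)\to\mathbb F_p$. *)

theory Defs
  imports "HOL-Algebra.Algebra"
begin

definition grp_center :: "('a, 'b) monoid_scheme \<Rightarrow> 'a set" where
  "grp_center G = {z \<in> carrier G. \<forall>x \<in> carrier G. z \<otimes>\<^bsub>G\<^esub> x = x \<otimes>\<^bsub>G\<^esub> z}"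

definition maximal_subgroup :: "'a set \<Rightarrow> ('a, 'b) monoid_scheme \<Rightarrow> bool" where
  "maximal_subgroup H G \<longleftrightarrow> subgroup H G \<and> H \<noteq> carrier G \<and>
     (\<forall>K. subgroup K G \<and> H \<subseteq> K \<longrightarrow> K = H \<or> K = carrier G)"

definition frattini :: "('a, 'b) monoid_scheme \<Rightarrow> 'a set" where
  "frattini G = carrier G \<inter> \<Inter> {H. maximal_subgroup H G}"

fun Lambda :: "('a, 'b) monoid_scheme \<Rightarrow> nat \<Rightarrow> 'a set" where
  "Lambda G 0 = {\<one>\<^bsub>G\<^esub>}"
| "Lambda G (Suc i) =
     {x \<in> carrier G. Lambda G i #>\<^bsub>G\<^esub> x \<in>
        grp_center (G Mod Lambda G i) \<inter> derived (G Mod Lambda G i) (carrier (G Mod Lambda G i))}"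

definition ordprod :: "('a, 'b) monoid_scheme \<Rightarrow> (nat \<Rightarrow> 'a) \<Rightarrow> (nat \<Rightarrow> nat) \<Rightarrow> nat list \<Rightarrow> 'a" where
  "ordprod G g a is = foldr (\<lambda>i acc. (g i [^]\<^bsub>G\<^esub> a i) \<otimes>\<^bsub>G\<^esub> acc) is \<one>\<^bsub>G\<^esub>"

text \<open>g 1, ..., g n is an F_p-basis of the elementary abelian subgroup D:
  every element of D is uniquely g 1 [^] a 1 \<otimes> ... \<otimes> g n [^] a n with 0 \<le> a i < p.\<close>
definition fp_basis :: "('a, 'b) monoid_scheme \<Rightarrow> nat \<Rightarrow> 'a set \<Rightarrow> nat \<Rightarrow> (nat \<Rightarrow> 'a) \<Rightarrow> bool" where
  "fp_basis G p D n g \<longleftrightarrow> (\<forall>i \<in> {1..n}. g i \<in> D) \<and>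
     bij_betw (\<lambda>a. ordprod G g a [1..<Suc n]) ({1..n} \<rightarrow>\<^sub>E {..<p}) D"

end

theory Submission
  imports Defs
begin

text \<open>
  Throughout, D = D(G) is elementary abelian with basis g 1, ..., g n, so its elements are
  the ordered products of powers of the g j, i.e. coordinate vectors over F_p. The proof
  has three parts.

  (a) Pure group theory: every Lambda i is a normal subgroup inside D, and Lambda (i + 1)
      consists of the x in D all of whose commutators inv s * x * s * inv x lie in Lambda i.
      This replaces the quotient-group definition by the explicit recursion comm_chain.

  (b) Linear algebra in D (locale unitriangular_basis): conjugation by s acts on coordinates
      by the unitriangular matrix l, so the commutator of s with the vector a has
      coordinates k |-> sum over i < k of a i * l k i. Consequently the tail spans
      V k = span (g (n-k+1), ..., g n), of order p^k, always lie in Lambda k; conversely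
      Lambda k lies in V k for every k exactly when each subdiagonal form l (j+1) j is
      nonzero: a lowest nonzero coordinate a j survives as a j * l (j+1) j, whereas
      l (j+1) j = 0 lets g j enter Lambda (n - j) too early. This is (2) iff (3).

  (c) Counting: Lambda i / Lambda (i-1) is cyclic of order p iff its order is p, i.e. iff
      the orders of the Lambda i are p^i; as V i is contained in Lambda i and has order
      p^i, this is (1) iff (2).
\<close>

text \<open>The coordinate list [1..<Suc n] is kept as a literal; its set is read as {1..n}.\<close>
declare upt_Suc[simp del] atLeastLessThanSuc_atLeastAtMost[simp]

lemma (in group) rcos_eq_iff:
  assumes H: "subgroup H G" and a: "a \<in> carrier G" and b: "b \<in> carrier G"
  shows "H #> a = H #> b \<longleftrightarrow> a \<otimes> inv b \<in> H"
proof -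
  have "H #> a = H #> b \<longleftrightarrow> a \<in> H #> b"
    using repr_independence[OF _ b H, of a] rcos_self[OF a H] by auto
  also have "\<dots> \<longleftrightarrow> a \<otimes> inv b \<in> H" by (rule subgroup.rcos_module[OF H is_group b a])
  finally show ?thesis .
qed

lemma (in group) grp_center_normal: "grp_center G \<lhd> G"
proof -
  have comm: "z \<otimes> x = x \<otimes> z" if "z \<in> grp_center G" "x \<in> carrier G" for z x
    using that by (simp add: grp_center_def)
  have carr: "z \<in> carrier G" if "z \<in> grp_center G" for z
    using that by (simp add: grp_center_def)
  have sub: "subgroup (grp_center G) G"
  proof (rule subgroupI)
    show "grp_center G \<subseteq> carrier G" "grp_center G \<noteq> {}"
      by (auto simp: grp_center_def)
  next
    fix z assume z: "z \<in> grp_center G"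
    have "inv z \<otimes> x = x \<otimes> inv z" if x: "x \<in> carrier G" for x
    proof -
      have "inv z \<otimes> x = inv z \<otimes> (x \<otimes> z) \<otimes> inv z" using carr[OF z] x by (simp add: m_assoc)
      also have "\<dots> = x \<otimes> inv z"
        unfolding comm[OF z x, symmetric] using carr[OF z] x by (simp add: m_assoc[symmetric])
      finally show ?thesis .
    qed
    then show "inv z \<in> grp_center G" using carr[OF z] by (simp add: grp_center_def)
  next
    fix z w assume z: "z \<in> grp_center G" and w: "w \<in> grp_center G"
    have zc: "z \<in> carrier G" and wc: "w \<in> carrier G" using carr z w by auto
    have "z \<otimes> w \<otimes> x = x \<otimes> (z \<otimes> w)" if x: "x \<in> carrier G" for x
    proof -
      have "z \<otimes> w \<otimes> x = z \<otimes> (w \<otimes> x)" using zc wc x by (rule m_assoc)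
      also have "w \<otimes> x = x \<otimes> w" by (rule comm[OF w x])
      also have "z \<otimes> (x \<otimes> w) = z \<otimes> x \<otimes> w" using zc x wc by (rule m_assoc[symmetric])
      also have "z \<otimes> x = x \<otimes> z" by (rule comm[OF z x])
      also have "x \<otimes> z \<otimes> w = x \<otimes> (z \<otimes> w)" using x zc wc by (rule m_assoc)
      finally show ?thesis .
    qed
    then show "z \<otimes> w \<in> grp_center G" using zc wc by (simp add: grp_center_def)
  qed
  have "x \<otimes> z \<otimes> inv x = z" if x: "x \<in> carrier G" and z: "z \<in> grp_center G" for x z
    unfolding comm[OF z x, symmetric] using carr[OF z] x by (simp add: m_assoc)
  then show ?thesis
    unfolding normal_inv_iff using sub by simp
qed

lemma (in group_hom) normal_vimage:
  assumes N: "N \<lhd> H"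
  shows "{x \<in> carrier G. h x \<in> N} \<lhd> G"
proof -
  interpret N: normal N H by (rule N)
  have sub: "subgroup {x \<in> carrier G. h x \<in> N} G"
    by (rule G.subgroupI) (auto simp: N.m_inv_closed N.m_closed N.one_closed intro: exI[of _ \<one>])
  have "h (t \<otimes> x \<otimes> inv t) \<in> N" if "t \<in> carrier G" "x \<in> carrier G" "h x \<in> N" for t x
    using that N H.normal_inv_iff by simp
  then show ?thesis
    unfolding G.normal_inv_iff using sub by auto
qed

lemma (in group) center_Mod_iff:
  assumes L: "L \<lhd> G" and x: "x \<in> carrier G"
  shows "L #> x \<in> grp_center (G Mod L) \<longleftrightarrow> (\<forall>s\<in>carrier G. inv s \<otimes> x \<otimes> s \<otimes> inv x \<in> L)"
proof -
  have H: "subgroup L G" using L normal_imp_subgroup by blast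
  have "L #> x \<in> grp_center (G Mod L) \<longleftrightarrow> (\<forall>s\<in>carrier G. L #> (x \<otimes> s) = L #> (s \<otimes> x))"
    unfolding grp_center_def carrier_FactGroup using x normal.rcos_sum[OF L] by auto
  also have "\<dots> \<longleftrightarrow> (\<forall>s\<in>carrier G. L #> (inv s \<otimes> x) = L #> (x \<otimes> inv s))"
    by (metis inv_closed inv_inv)
  also have "\<dots> \<longleftrightarrow> (\<forall>s\<in>carrier G. inv s \<otimes> x \<otimes> s \<otimes> inv x \<in> L)"
    using x by (simp add: rcos_eq_iff[OF H] inv_mult_group m_assoc)
  finally show ?thesis .
qed

lemma (in group) Mod_group_hom: "L \<lhd> G \<Longrightarrow> group_hom G (G Mod L) (\<lambda>a. L #> a)"
  by (simp add: group_hom_def group_hom_axioms_def is_group normal.factorgroup_is_group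
      normal.r_coset_hom_Mod)

text \<open>For L inside D(G), a coset L x lies in D(G / L) iff x lies in D(G), since D(G / L) is
  the image of D(G).\<close>
lemma (in group) derived_Mod_iff:
  assumes L: "L \<lhd> G" and LD: "L \<subseteq> derived G (carrier G)" and x: "x \<in> carrier G"
  shows "L #> x \<in> derived (G Mod L) (carrier (G Mod L)) \<longleftrightarrow> x \<in> derived G (carrier G)"
proof -
  have H: "subgroup L G" using L normal_imp_subgroup by blast
  have DS: "subgroup (derived G (carrier G)) G" by (rule derived_is_subgroup) simp
  from Mod_group_hom[OF L] have img: "derived (G Mod L) (carrier (G Mod L)) = (\<lambda>a. L #> a) ` derived G (carrier G)"
    unfolding carrier_FactGroup using group_hom.derived_img[of G "G Mod L" _ "carrier G"] by simp
  have "x \<in> derived G (carrier G)" if d: "d \<in> derived G (carrier G)" "L #> x = L #> d" for d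
  proof -
    have dc: "d \<in> carrier G" using d(1) subgroup.subset[OF DS] by auto
    have "x \<otimes> inv d \<in> derived G (carrier G)" using rcos_eq_iff[OF H x dc] d(2) LD by auto
    then have "(x \<otimes> inv d) \<otimes> d \<in> derived G (carrier G)" using subgroup.m_closed[OF DS] d(1) by blast
    then show ?thesis using x dc by (simp add: m_assoc)
  qed
  then show ?thesis unfolding img by auto
qed

text \<open>Each Lambda k is the preimage of the normal subgroup Z \<inter> D of G / Lambda (k - 1),
  hence normal, and it lies in D(G).\<close>
lemma (in group) Lambda_normal_in_derived:
  "Lambda G k \<lhd> G \<and> Lambda G k \<subseteq> derived G (carrier G)"
proof (induction k)
  case 0
  have "\<one> \<in> derived G (carrier G)"
    using derived_is_subgroup[of "carrier G"] subgroup.one_closed by auto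
  then show ?case using one_is_normal by simp
next
  case (Suc k)
  let ?L = "Lambda G k" and ?Q = "G Mod Lambda G k"
  have L: "?L \<lhd> G" and LD: "?L \<subseteq> derived G (carrier G)" using Suc by auto
  interpret Q: group ?Q by (rule normal.factorgroup_is_group[OF L])
  have hom: "group_hom G ?Q (\<lambda>a. ?L #> a)" by (rule Mod_group_hom[OF L])
  have "grp_center ?Q \<inter> derived ?Q (carrier ?Q) \<lhd> ?Q"
    by (intro Q.normal_subgroup_intersect Q.grp_center_normal Q.derived_is_normal Q.normal_self)
  from group_hom.normal_vimage[OF hom this] have "Lambda G (Suc k) \<lhd> G"
    by (simp add: Int_def)
  moreover have "Lambda G (Suc k) \<subseteq> derived G (carrier G)"
    using derived_Mod_iff[OF L LD] by auto
  ultimately show ?case ..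
qed

fun comm_chain :: "('a, 'b) monoid_scheme \<Rightarrow> 'a set \<Rightarrow> nat \<Rightarrow> 'a set" where
  "comm_chain G D 0 = {\<one>\<^bsub>G\<^esub>}"
| "comm_chain G D (Suc k) = {x \<in> D. \<forall>s \<in> carrier G.
      inv\<^bsub>G\<^esub> s \<otimes>\<^bsub>G\<^esub> x \<otimes>\<^bsub>G\<^esub> s \<otimes>\<^bsub>G\<^esub> inv\<^bsub>G\<^esub> x \<in> comm_chain G D k}"

lemma (in group) Lambda_eq_comm_chain: "Lambda G k = comm_chain G (derived G (carrier G)) k"
proof (induction k)
  case (Suc k)
  have L: "Lambda G k \<lhd> G" and LD: "Lambda G k \<subseteq> derived G (carrier G)"
    using Lambda_normal_in_derived by auto
  have "derived G (carrier G) \<subseteq> carrier G" by (rule derived_in_carrier) simp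
  then show ?case
    using center_Mod_iff[OF L] derived_Mod_iff[OF L LD] Suc.IH by auto
qed simp

text \<open>A group of prime order p is isomorphic to Z/p: any nontrivial element has order p,
  and its powers give the isomorphism.\<close>
lemma prime_order_group_iso:
  assumes Q: "group Q" and card_Q: "card (carrier Q) = p" and p: "Factorial_Ring.prime p"
  shows "Q \<cong> integer_mod_group p"
proof -
  interpret Q: group Q by (rule Q)
  have p1: "p > 1" using p prime_gt_1_nat by blast
  have fin: "finite (carrier Q)" using card_Q p1 card.infinite by fastforce
  have "carrier Q \<noteq> {\<one>\<^bsub>Q\<^esub>}" using card_Q p1 by auto
  then obtain x where x: "x \<in> carrier Q" "x \<noteq> \<one>\<^bsub>Q\<^esub>" using Q.one_closed by blast
  have "Q.ord x dvd p" using Q.ord_dvd_group_order[OF x(1)] card_Q unfolding order_def by simp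
  moreover have "Q.ord x \<noteq> 1" using Q.ord_eq_1 x by simp
  ultimately have ord_x: "Q.ord x = p" using p prime_nat_iff by blast
  define h where "h = (\<lambda>k::int. x [^]\<^bsub>Q\<^esub> k)"
  have h_eq: "h a = h b \<longleftrightarrow> int p dvd b - a" for a b
    unfolding h_def using Q.int_pow_eq[OF x(1)] ord_x by simp
  have carr: "carrier (integer_mod_group p) = {0..<int p}"
    using p1 by (simp add: carrier_integer_mod_group)
  have hom: "h \<in> hom (integer_mod_group p) Q"
  proof (rule homI)
    fix a b
    have "h ((a + b) mod int p) = h (a + b)"
      unfolding h_eq by (simp add: mod_eq_dvd_iff[symmetric])
    then show "h (a \<otimes>\<^bsub>integer_mod_group p\<^esub> b) = h a \<otimes>\<^bsub>Q\<^esub> h b"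
      unfolding h_def using x(1) by (simp add: Q.int_pow_mult)
  qed (use x(1) in \<open>simp add: h_def\<close>)
  have inj: "inj_on h {0..<int p}"
  proof (rule inj_onI)
    fix a b assume ab: "a \<in> {0..<int p}" "b \<in> {0..<int p}" and "h a = h b"
    then have "int p dvd b - a" by (simp add: h_eq)
    moreover have "\<bar>b - a\<bar> < int p" using ab by auto
    ultimately show "a = b" using dvd_imp_le_int[of "b - a" "int p"] by fastforce
  qed
  have "h ` {0..<int p} \<subseteq> carrier Q" unfolding h_def using x(1) by auto
  moreover have "card (h ` {0..<int p}) = card (carrier Q)" using card_image[OF inj] card_Q by simp
  ultimately have "h ` {0..<int p} = carrier Q" using card_subset_eq[OF fin] by blast
  then have "h \<in> iso (integer_mod_group p) Q"
    using hom inj carr unfolding iso_def bij_betw_def by simp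
  then show ?thesis by (rule group.iso_sym[OF group_integer_mod_group is_isoI])
qed

lemma (in group) factor_iso_Zp_iff:
  assumes K: "subgroup K G" and H: "H \<lhd> G" and HK: "H \<subseteq> K" and fin: "finite K"
    and p: "Factorial_Ring.prime p"
  shows "(G\<lparr>carrier := K\<rparr> Mod H \<cong> integer_mod_group p) \<longleftrightarrow> card K = p * card H"
proof -
  let ?Q = "G\<lparr>carrier := K\<rparr> Mod H"
  have HS: "subgroup H G" using H normal_imp_subgroup by blast
  interpret GK: group "G\<lparr>carrier := K\<rparr>" by (rule subgroup_imp_group[OF K])
  have HGK: "H \<lhd> G\<lparr>carrier := K\<rparr>" by (rule normal_restrict_supergroup[OF K H HK])
  have Q: "group ?Q" by (rule normal.factorgroup_is_group[OF HGK])
  have "card (carrier ?Q) * card H = card K"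
    using GK.lagrange[OF subgroup_incl[OF HS K HK]] by (simp add: FactGroup_def order_def)
  moreover have "card H > 0"
    using fin HK subgroup.one_closed[OF HS] by (metis card_gt_0_iff empty_iff finite_subset)
  ultimately have card_Q: "card (carrier ?Q) = p \<longleftrightarrow> card K = p * card H" by auto
  have "card (carrier (integer_mod_group p)) = p"
    using prime_gt_1_nat[OF p] by (simp add: carrier_integer_mod_group)
  then have "?Q \<cong> integer_mod_group p \<longleftrightarrow> card (carrier ?Q) = p"
    using iso_same_card prime_order_group_iso[OF Q _ p] by metis
  then show ?thesis using card_Q by simp
qed

lemma ordprod_Nil [simp]: "ordprod G g a [] = \<one>\<^bsub>G\<^esub>"
  by (simp add: ordprod_def)

lemma ordprod_Cons [simp]: "ordprod G g a (i # is) = g i [^]\<^bsub>G\<^esub> a i \<otimes>\<^bsub>G\<^esub> ordprod G g a is"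
  by (simp add: ordprod_def)

lemma ordprod_cong: "(\<And>i. i \<in> set is \<Longrightarrow> a i = b i) \<Longrightarrow> ordprod G g a is = ordprod G g b is"
  by (induction "is") auto

lemma (in monoid) ordprod_zero: "(\<And>i. i \<in> set is \<Longrightarrow> a i = 0) \<Longrightarrow> ordprod G g a is = \<one>\<^bsub>G\<^esub>"
  by (induction "is") auto

lemma (in group) conj_mult:
  "s \<in> carrier G \<Longrightarrow> x \<in> carrier G \<Longrightarrow> y \<in> carrier G \<Longrightarrow>
   inv s \<otimes> (x \<otimes> y) \<otimes> s = (inv s \<otimes> x \<otimes> s) \<otimes> (inv s \<otimes> y \<otimes> s)"
proof -
  assume carr: "s \<in> carrier G" "x \<in> carrier G" "y \<in> carrier G"
  have cancel: "s \<otimes> (inv s \<otimes> z) = z" if "z \<in> carrier G" for z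
    using carr that by (simp add: m_assoc[symmetric])
  show ?thesis using carr by (simp add: m_assoc cancel)
qed

lemma (in group) conj_pow:
  "s \<in> carrier G \<Longrightarrow> x \<in> carrier G \<Longrightarrow> inv s \<otimes> (x [^] (m::nat)) \<otimes> s = (inv s \<otimes> x \<otimes> s) [^] m"
  by (induction m) (simp_all add: conj_mult)

text \<open>The setting of the proposition for an arbitrary subgroup D: D is elementary abelian with
  basis g 1, ..., g n, and conjugation by any representative s of a coset y of D acts
  unitriangularly with subdiagonal coefficients l i j y.\<close>
locale unitriangular_basis = group G for G (structure) +
  fixes p n :: nat and g :: "nat \<Rightarrow> 'a" and D :: "'a set" and l :: "nat \<Rightarrow> nat \<Rightarrow> 'a set \<Rightarrow> nat"
  assumes D_subgroup: "subgroup D G"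
    and D_comm: "\<forall>x \<in> D. \<forall>y \<in> D. x \<otimes> y = y \<otimes> x"
    and D_exp: "\<forall>x \<in> D. x [^] p = \<one>"
    and p_prime: "Factorial_Ring.prime p"
    and basis: "fp_basis G p D n g"
    and l_range: "\<forall>i j y. l i j y < p"
    and unitri: "\<forall>y \<in> carrier (G Mod D). \<forall>s \<in> y. \<forall>j \<in> {1..n}.
      inv s \<otimes> g j \<otimes> s = g j \<otimes> ordprod G g (\<lambda>i. l i j y) [Suc j..<Suc n]"
begin

abbreviation coords :: "(nat \<Rightarrow> nat) set" where
  "coords \<equiv> {1..n} \<rightarrow>\<^sub>E {..<p}"

abbreviation coord_prod :: "(nat \<Rightarrow> nat) \<Rightarrow> 'a" where
  "coord_prod a \<equiv> ordprod G g a [1..<Suc n]"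

lemma p_gt_1: "p > 1"
  using p_prime prime_gt_1_nat by blast

lemma g_in_D: "j \<in> {1..n} \<Longrightarrow> g j \<in> D"
  using basis by (auto simp: fp_basis_def)

lemma coord_bij: "bij_betw coord_prod coords D"
  using basis by (simp add: fp_basis_def)

lemma coord_prod_inj: "a \<in> coords \<Longrightarrow> b \<in> coords \<Longrightarrow> coord_prod a = coord_prod b \<Longrightarrow> a = b"
  using bij_betw_imp_inj_on[OF coord_bij] by (auto dest: inj_onD)

lemma coord_prod_surj: "x \<in> D \<Longrightarrow> \<exists>a \<in> coords. x = coord_prod a"
  using bij_betw_imp_surj_on[OF coord_bij] by auto

lemma D_finite: "finite D"
  using bij_betw_finite[OF coord_bij] by (simp add: finite_PiE)

lemma D_carrier: "x \<in> D \<Longrightarrow> x \<in> carrier G"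
  using subgroup.subset[OF D_subgroup] by blast

lemma pow_in_D: "x \<in> D \<Longrightarrow> x [^] (m::nat) \<in> D"
  by (induction m) (auto intro: subgroup.m_closed[OF D_subgroup] subgroup.one_closed[OF D_subgroup])

lemma ordprod_in_D: "set is \<subseteq> {1..n} \<Longrightarrow> ordprod G g a is \<in> D"
  by (induction "is")
    (simp_all add: subgroup.m_closed[OF D_subgroup] subgroup.one_closed[OF D_subgroup] pow_in_D g_in_D)

text \<open>Since D is abelian, coordinate vectors add when the products are multiplied.\<close>
lemma ordprod_mult:
  "set is \<subseteq> {1..n} \<Longrightarrow> ordprod G g a is \<otimes> ordprod G g b is = ordprod G g (\<lambda>i. a i + b i) is"
proof (induction "is")
  case (Cons i "is")
  then have i: "i \<in> {1..n}" and is_sub: "set is \<subseteq> {1..n}" by auto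
  define A B u v where "A = ordprod G g a is" and "B = ordprod G g b is"
    and "u = g i [^] a i" and "v = g i [^] b i"
  have AD: "A \<in> D" "B \<in> D" and vD: "v \<in> D"
    unfolding A_def B_def v_def using ordprod_in_D[OF is_sub] pow_in_D g_in_D i by auto
  have carr: "A \<in> carrier G" "B \<in> carrier G" "u \<in> carrier G" "v \<in> carrier G"
    using AD vD D_carrier g_in_D[OF i] unfolding u_def by auto
  have "(u \<otimes> A) \<otimes> (v \<otimes> B) = u \<otimes> ((A \<otimes> v) \<otimes> B)" using carr by (simp add: m_assoc)
  also have "A \<otimes> v = v \<otimes> A" using D_comm AD vD by blast
  also have "u \<otimes> ((v \<otimes> A) \<otimes> B) = (u \<otimes> v) \<otimes> (A \<otimes> B)" using carr by (simp add: m_assoc)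
  also have "u \<otimes> v = g i [^] (a i + b i)"
    unfolding u_def v_def using D_carrier[OF g_in_D[OF i]] by (rule nat_pow_mult)
  finally show ?case using Cons.IH[OF is_sub] unfolding A_def B_def u_def v_def by simp
qed simp

lemma ordprod_pow:
  "set is \<subseteq> {1..n} \<Longrightarrow> ordprod G g a is [^] (m::nat) = ordprod G g (\<lambda>i. m * a i) is"
  by (induction m) (simp_all add: ordprod_zero ordprod_mult add.commute)

lemma ordprod_mod: "set is \<subseteq> {1..n} \<Longrightarrow> ordprod G g a is = ordprod G g (\<lambda>i. a i mod p) is"
proof (induction "is")
  case (Cons i "is")
  have gi: "g i \<in> D" using Cons.prems g_in_D by auto
  have "g i [^] a i = g i [^] (a i mod p + p * (a i div p))" by simp
  also have "\<dots> = g i [^] (a i mod p) \<otimes> (g i [^] p) [^] (a i div p)"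
    using D_carrier[OF gi] by (simp add: nat_pow_mult nat_pow_pow)
  also have "\<dots> = g i [^] (a i mod p)" using D_carrier[OF gi] D_exp gi by simp
  finally show ?case using Cons by simp
qed simp

lemma ordprod_append:
  "set is \<subseteq> {1..n} \<Longrightarrow> set js \<subseteq> {1..n} \<Longrightarrow>
   ordprod G g a (is @ js) = ordprod G g a is \<otimes> ordprod G g a js"
  by (induction "is") (auto simp: m_assoc D_carrier g_in_D ordprod_in_D)

lemma ordprod_delta:
  "set is \<subseteq> {1..n} \<Longrightarrow> distinct is \<Longrightarrow>
   ordprod G g (\<lambda>i. if i = j then 1 else 0) is = (if j \<in> set is then g j else \<one>)"
  by (induction "is") (auto simp: ordprod_zero D_carrier g_in_D)

lemma coset_elem_carrier: "y \<in> carrier (G Mod D) \<Longrightarrow> s \<in> y \<Longrightarrow> s \<in> carrier G"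
  using subgroup.elemrcos_carrier[OF D_subgroup is_group] by (auto simp: carrier_FactGroup RCOSETS_def)

lemma rcos_in_Mod: "s \<in> carrier G \<Longrightarrow> D #> s \<in> carrier (G Mod D) \<and> s \<in> D #> s"
  using rcos_self[OF _ D_subgroup] by (auto simp: carrier_FactGroup RCOSETS_def)

lemma ordprod_tail:
  assumes j: "j \<in> {1..n}"
  shows "ordprod G g c [Suc j..<Suc n] = coord_prod (\<lambda>k. if j < k then c k else 0)"
proof -
  have split: "[1..<Suc n] = [1..<Suc j] @ [Suc j..<Suc n]"
    using j upt_add_eq_append[of 1 "Suc j" "n - j"] by auto
  have "coord_prod (\<lambda>k. if j < k then c k else 0)
      = ordprod G g (\<lambda>k. if j < k then c k else 0) [1..<Suc j] \<otimes>
        ordprod G g (\<lambda>k. if j < k then c k else 0) [Suc j..<Suc n]"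
    unfolding split using j by (intro ordprod_append) auto
  also have "ordprod G g (\<lambda>k. if j < k then c k else 0) [1..<Suc j] = \<one>"
    by (intro ordprod_zero) auto
  also have "ordprod G g (\<lambda>k. if j < k then c k else 0) [Suc j..<Suc n] = ordprod G g c [Suc j..<Suc n]"
    by (intro ordprod_cong) auto
  finally show ?thesis using j by (simp add: D_carrier ordprod_in_D)
qed

definition conj_coeffs :: "nat \<Rightarrow> 'a set \<Rightarrow> nat \<Rightarrow> nat" where
  "conj_coeffs j y k = (if k = j then 1 else 0) + (if j < k then l k j y else 0)"

lemma conj_basis:
  assumes y: "y \<in> carrier (G Mod D)" and s: "s \<in> y" and j: "j \<in> {1..n}"
  shows "inv s \<otimes> g j \<otimes> s = coord_prod (conj_coeffs j y)"
proof -
  have delta: "coord_prod (\<lambda>i. if i = j then 1 else 0) = g j"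
    using ordprod_delta[of "[1..<Suc n]" j] j by simp
  from unitri y s j have "inv s \<otimes> g j \<otimes> s = g j \<otimes> ordprod G g (\<lambda>i. l i j y) [Suc j..<Suc n]"
    by blast
  also have "\<dots> = coord_prod (\<lambda>i. if i = j then 1 else 0) \<otimes> coord_prod (\<lambda>k. if j < k then l k j y else 0)"
    by (simp only: delta ordprod_tail[OF j])
  also have "\<dots> = coord_prod (conj_coeffs j y)"
    unfolding conj_coeffs_def by (intro ordprod_mult) auto
  finally show ?thesis .
qed

text \<open>Conjugation is an endomorphism of D, so it acts linearly on coordinates.\<close>
lemma conj_ordprod:
  assumes y: "y \<in> carrier (G Mod D)" and s: "s \<in> y" and "is": "set is \<subseteq> {1..n}"
  shows "inv s \<otimes> ordprod G g a is \<otimes> s = coord_prod (\<lambda>k. \<Sum>i\<leftarrow>is. a i * conj_coeffs i y k)"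
  using "is"
proof (induction "is")
  case Nil
  then show ?case using coset_elem_carrier[OF y s] by (simp add: ordprod_zero)
next
  case (Cons i "is")
  then have i: "i \<in> {1..n}" and is_sub: "set is \<subseteq> {1..n}" by auto
  have sc: "s \<in> carrier G" by (rule coset_elem_carrier[OF y s])
  have gc: "g i \<in> carrier G" using D_carrier g_in_D i by blast
  have "inv s \<otimes> ordprod G g a (i # is) \<otimes> s
     = (inv s \<otimes> g i \<otimes> s) [^] a i \<otimes> (inv s \<otimes> ordprod G g a is \<otimes> s)"
    using sc gc D_carrier[OF ordprod_in_D[OF is_sub]] by (simp add: conj_mult conj_pow)
  also have "\<dots> = coord_prod (\<lambda>k. a i * conj_coeffs i y k) \<otimes>
      coord_prod (\<lambda>k. \<Sum>i\<leftarrow>is. a i * conj_coeffs i y k)"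
    using Cons.IH[OF is_sub] conj_basis[OF y s i] by (simp add: ordprod_pow)
  also have "\<dots> = coord_prod (\<lambda>k. \<Sum>i\<leftarrow>i # is. a i * conj_coeffs i y k)"
    by (simp add: ordprod_mult)
  finally show ?case .
qed

text \<open>Coordinates of the commutator of an element with coordinates a, before reduction mod p.\<close>
definition comm_coords :: "'a set \<Rightarrow> (nat \<Rightarrow> nat) \<Rightarrow> nat \<Rightarrow> nat" where
  "comm_coords y a k = (\<Sum>i\<in>{1..n}. if i < k then a i * l k i y else 0)"

definition reduce :: "(nat \<Rightarrow> nat) \<Rightarrow> nat \<Rightarrow> nat" where
  "reduce a = restrict (\<lambda>k. a k mod p) {1..n}"

lemma reduce_in_coords: "reduce a \<in> coords"
  using p_gt_1 by (auto simp: reduce_def)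

lemma coord_prod_reduce: "coord_prod (reduce a) = coord_prod a"
proof -
  have "coord_prod a = coord_prod (\<lambda>i. a i mod p)" by (rule ordprod_mod) simp
  also have "\<dots> = coord_prod (reduce a)" unfolding reduce_def by (intro ordprod_cong) auto
  finally show ?thesis by simp
qed

lemma conj_coord_prod:
  assumes y: "y \<in> carrier (G Mod D)" and s: "s \<in> y"
  shows "inv s \<otimes> coord_prod a \<otimes> s = coord_prod (\<lambda>k. a k + comm_coords y a k)"
proof -
  have "(\<Sum>i\<leftarrow>[1..<Suc n]. a i * conj_coeffs i y k) = a k + comm_coords y a k"
    if k: "k \<in> {1..n}" for k
  proof -
    have "(\<Sum>i\<leftarrow>[1..<Suc n]. a i * conj_coeffs i y k)
        = (\<Sum>i\<in>{1..n}. (if i = k then a i else 0) + (if i < k then a i * l k i y else 0))"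
      by (simp add: sum_list_distinct_conv_sum_set) (auto simp: conj_coeffs_def intro!: sum.cong)
    then show ?thesis using k by (simp add: sum.distrib comm_coords_def)
  qed
  then have "coord_prod (\<lambda>k. \<Sum>i\<leftarrow>[1..<Suc n]. a i * conj_coeffs i y k)
      = coord_prod (\<lambda>k. a k + comm_coords y a k)"
    by (intro ordprod_cong) auto
  then show ?thesis using conj_ordprod[OF y s, of "[1..<Suc n]" a] by simp
qed

lemma commutator_coords:
  assumes y: "y \<in> carrier (G Mod D)" and s: "s \<in> y"
  shows "inv s \<otimes> coord_prod a \<otimes> s \<otimes> inv (coord_prod a) = coord_prod (reduce (comm_coords y a))"
proof -
  let ?x = "coord_prod a" and ?c = "coord_prod (comm_coords y a)"
  have xD: "?x \<in> D" and cD: "?c \<in> D" by (auto intro: ordprod_in_D)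
  have "inv s \<otimes> ?x \<otimes> s = ?x \<otimes> ?c"
    using conj_coord_prod[OF y s] by (simp add: ordprod_mult)
  then have "inv s \<otimes> ?x \<otimes> s \<otimes> inv ?x = ?c \<otimes> ?x \<otimes> inv ?x"
    using D_comm xD cD by simp
  also have "\<dots> = ?c" using D_carrier[OF xD] D_carrier[OF cD] by (simp add: m_assoc)
  also have "\<dots> = coord_prod (reduce (comm_coords y a))" by (rule coord_prod_reduce[symmetric])
  finally show ?thesis .
qed

definition unit_coords :: "nat \<Rightarrow> nat \<Rightarrow> nat" where
  "unit_coords j = restrict (\<lambda>i. if i = j then 1 else 0) {1..n}"

lemma unit_coords_in_coords: "unit_coords j \<in> coords"
  using p_gt_1 by (auto simp: unit_coords_def)

lemma g_eq_unit_coords: "j \<in> {1..n} \<Longrightarrow> g j = coord_prod (unit_coords j)"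
proof -
  assume j: "j \<in> {1..n}"
  have "g j = coord_prod (\<lambda>i. if i = j then 1 else 0)" using ordprod_delta[of "[1..<Suc n]" j] j by simp
  also have "\<dots> = coord_prod (unit_coords j)" unfolding unit_coords_def by (intro ordprod_cong) auto
  finally show ?thesis .
qed

text \<open>Coordinate vectors supported on the last k indices, and their products:
  the span of g (n-k+1), ..., g n.\<close>
definition tail_coords :: "nat \<Rightarrow> (nat \<Rightarrow> nat) set" where
  "tail_coords k = PiE {1..n} (\<lambda>j. if j \<le> n - k then {0} else {..<p})"

definition tail_span :: "nat \<Rightarrow> 'a set" where
  "tail_span k = coord_prod ` tail_coords k"

lemma tail_coords_iff:
  "a \<in> tail_coords k \<longleftrightarrow> a \<in> coords \<and> (\<forall>j \<in> {1..n}. j \<le> n - k \<longrightarrow> a j = 0)"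
  using p_gt_1 by (auto simp: tail_coords_def PiE_iff extensional_def split: if_splits)

lemma reduce_in_tail_coords:
  "(\<And>j. j \<in> {1..n} \<Longrightarrow> j \<le> n - k \<Longrightarrow> a j = 0) \<Longrightarrow> reduce a \<in> tail_coords k"
  using reduce_in_coords[of a] by (auto simp: tail_coords_iff reduce_def)

lemma card_tail_span: "k \<le> n \<Longrightarrow> card (tail_span k) = p ^ k"
proof -
  assume k: "k \<le> n"
  have "inj_on coord_prod (tail_coords k)"
    using bij_betw_imp_inj_on[OF coord_bij] by (rule inj_on_subset) (use tail_coords_iff in blast)
  then have "card (tail_span k) = card (tail_coords k)"
    unfolding tail_span_def by (rule card_image)
  also have "\<dots> = (\<Prod>j\<in>{1..n}. if j \<le> n - k then 1 else p)"
    unfolding tail_coords_def by (simp add: card_PiE) (intro prod.cong; simp)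
  also have "\<dots> = p ^ card ({1..n} \<inter> - {j. j \<le> n - k})"
    by (simp add: prod.If_cases)
  also have "{1..n} \<inter> - {j. j \<le> n - k} = {n - k + 1..n}" using k by auto
  finally show ?thesis using k by simp
qed

lemma zero_coords_in_tail: "restrict (\<lambda>j. 0) {1..n} \<in> tail_coords k"
  using p_gt_1 by (auto simp: tail_coords_iff)

lemma one_in_tail_span: "\<one> \<in> tail_span k"
proof -
  have "coord_prod (restrict (\<lambda>j. 0) {1..n}) = \<one>" by (intro ordprod_zero) auto
  then show ?thesis unfolding tail_span_def using zero_coords_in_tail by (metis image_eqI)
qed

lemma tail_span_subgroup: "subgroup (tail_span k) G"
proof (rule subgroupI)
  show "tail_span k \<subseteq> carrier G"
    unfolding tail_span_def using D_carrier ordprod_in_D by auto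
  show "tail_span k \<noteq> {}" using one_in_tail_span by blast
next
  fix x assume "x \<in> tail_span k"
  then obtain a where a: "a \<in> tail_coords k" and x: "x = coord_prod a" by (auto simp: tail_span_def)
  have xc: "x \<in> carrier G" using x D_carrier ordprod_in_D by simp
  have "x [^] (p - 1) \<otimes> x = x [^] p"
    using p_gt_1 xc by (simp add: nat_pow_Suc[symmetric])
  also have "\<dots> = \<one>" using D_exp x ordprod_in_D by simp
  finally have "inv x = x [^] (p - 1)" using xc by (intro inv_equality) auto
  also have "\<dots> = coord_prod (reduce (\<lambda>i. (p - 1) * a i))"
    unfolding x coord_prod_reduce by (simp add: ordprod_pow)
  finally have "inv x = coord_prod (reduce (\<lambda>i. (p - 1) * a i))" .
  moreover have "reduce (\<lambda>i. (p - 1) * a i) \<in> tail_coords k"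
    using a by (intro reduce_in_tail_coords) (simp add: tail_coords_iff)
  ultimately show "inv x \<in> tail_span k" unfolding tail_span_def by (rule image_eqI)
next
  fix x y assume "x \<in> tail_span k" "y \<in> tail_span k"
  then obtain a b where a: "a \<in> tail_coords k" "x = coord_prod a"
    and b: "b \<in> tail_coords k" "y = coord_prod b" by (auto simp: tail_span_def)
  have "x \<otimes> y = coord_prod (reduce (\<lambda>i. a i + b i))"
    unfolding a(2) b(2) coord_prod_reduce by (simp add: ordprod_mult)
  moreover have "reduce (\<lambda>i. a i + b i) \<in> tail_coords k"
    using a(1) b(1) by (intro reduce_in_tail_coords) (simp add: tail_coords_iff)
  ultimately show "x \<otimes> y \<in> tail_span k" unfolding tail_span_def by (rule image_eqI)
qed

lemma tail_span_eq_generate: "tail_span k = generate G (g ` {n - k + 1..n})"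
proof
  let ?S = "generate G (g ` {n - k + 1..n})"
  have S: "subgroup ?S G"
    by (rule generate_is_subgroup) (use D_carrier g_in_D in auto)
  have "ordprod G g a is \<in> ?S"
    if "set is \<subseteq> {1..n}" "\<forall>j \<in> set is. j \<le> n - k \<longrightarrow> a j = 0" for a "is"
    using that
  proof (induction "is")
    case (Cons i "is")
    have "g i [^] a i \<in> ?S"
    proof (cases "i \<le> n - k")
      case False
      then have "g i \<in> ?S" using Cons.prems by (intro generate.incl) auto
      then show ?thesis using subgroup_int_pow_closed[OF S, of "g i" "int (a i)"] by (simp add: int_pow_int)
    qed (use Cons.prems subgroup.one_closed[OF S] in simp)
    then show ?case using Cons subgroup.m_closed[OF S] by simp
  qed (simp add: generate.one)
  then show "tail_span k \<subseteq> ?S"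
    unfolding tail_span_def by (auto simp: tail_coords_iff)
  have "g ` {n - k + 1..n} \<subseteq> tail_span k"
  proof
    fix x assume "x \<in> g ` {n - k + 1..n}"
    then obtain j where j: "j \<in> {n - k + 1..n}" "x = g j" by auto
    then have "unit_coords j \<in> tail_coords k"
      using unit_coords_in_coords by (auto simp: tail_coords_iff unit_coords_def)
    then show "x \<in> tail_span k"
      unfolding tail_span_def using g_eq_unit_coords j by auto
  qed
  then show "?S \<subseteq> tail_span k"
    by (rule generate_subgroup_incl[OF _ tail_span_subgroup])
qed

abbreviation chain :: "nat \<Rightarrow> 'a set" where
  "chain \<equiv> comm_chain G D"

lemma comm_coords_vanish:
  assumes "\<forall>i \<in> {1..n}. i < m \<longrightarrow> a i = 0" and "k \<le> m"
  shows "comm_coords y a k = 0"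
  using assms unfolding comm_coords_def by (intro sum.neutral) auto

lemma comm_coords_lowest:
  assumes low: "\<forall>i \<in> {1..n}. i < j \<longrightarrow> a i = 0" and j: "j \<in> {1..n}"
  shows "comm_coords y a (Suc j) = a j * l (Suc j) j y"
proof -
  have "comm_coords y a (Suc j) = (\<Sum>i\<in>{1..n}. if i = j then a j * l (Suc j) j y else 0)"
    unfolding comm_coords_def using low by (intro sum.cong) auto
  then show ?thesis using j by simp
qed

lemma lowest_coord_survives:
  assumes a: "a \<in> coords" and low: "\<forall>i \<in> {1..n}. i < j \<longrightarrow> a i = 0" and aj: "a j \<noteq> 0"
    and j: "Suc j \<in> {1..n}" and lj: "l (Suc j) j y \<noteq> 0" and j1: "j \<ge> 1"
  shows "reduce (comm_coords y a) (Suc j) \<noteq> 0"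
proof
  assume "reduce (comm_coords y a) (Suc j) = 0"
  then have "p dvd a j * l (Suc j) j y"
    using comm_coords_lowest[OF low] j j1 by (simp add: reduce_def dvd_eq_mod_eq_0)
  then have "p dvd a j \<or> p dvd l (Suc j) j y" using p_prime prime_dvd_mult_iff by blast
  moreover have "a j < p" using a j j1 by auto
  moreover have "l (Suc j) j y < p" using l_range by blast
  ultimately show False using aj lj by (auto dest: dvd_imp_le)
qed

text \<open>Tail spans always lie in the chain: commutators push coordinates one step down.\<close>
lemma tail_span_subset_chain: "tail_span k \<subseteq> chain k"
proof (induction k)
  case 0
  have "coord_prod a = \<one>" if "a \<in> tail_coords 0" for a
    using that by (intro ordprod_zero) (auto simp: tail_coords_iff)
  then show ?case by (auto simp: tail_span_def)
next
  case (Suc k)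
  show ?case
  proof
    fix x assume "x \<in> tail_span (Suc k)"
    then obtain a where a: "a \<in> tail_coords (Suc k)" and x: "x = coord_prod a"
      by (auto simp: tail_span_def)
    have "inv s \<otimes> x \<otimes> s \<otimes> inv x \<in> chain k" if s: "s \<in> carrier G" for s
    proof -
      have y: "D #> s \<in> carrier (G Mod D)" and sy: "s \<in> D #> s" using rcos_in_Mod[OF s] by auto
      have "comm_coords (D #> s) a j = 0" if "j \<le> n - k" for j
        using a that by (intro comm_coords_vanish[of "n - k"]) (auto simp: tail_coords_iff)
      then have "reduce (comm_coords (D #> s) a) \<in> tail_coords k"
        by (intro reduce_in_tail_coords) auto
      then have "coord_prod (reduce (comm_coords (D #> s) a)) \<in> chain k"
        using Suc.IH unfolding tail_span_def by blast
      then show ?thesis unfolding x commutator_coords[OF y sy] .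
    qed
    moreover have "x \<in> D" using x ordprod_in_D by simp
    ultimately show "x \<in> chain (Suc k)" by simp
  qed
qed

text \<open>If all subdiagonal forms are nonzero, the chain is no larger than the tail spans:
  an element outside V (k+1) has a lowest coordinate j \<le> n - (k+1), and its commutator with a
  suitable s has nonzero coordinate j+1 \<le> n - k, so it is not in V k.\<close>
lemma chain_subset_tail_span:
  assumes nz: "\<forall>j \<in> {1..n - 1}. \<exists>y \<in> carrier (G Mod D). l (Suc j) j y \<noteq> 0"
  shows "k \<le> n \<Longrightarrow> chain k \<subseteq> tail_span k"
proof (induction k)
  case 0
  then show ?case using one_in_tail_span by simp
next
  case (Suc k)
  then have IH: "chain k \<subseteq> tail_span k" and kn: "Suc k \<le> n" by auto
  show ?case
  proof
    fix x assume x: "x \<in> chain (Suc k)"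
    then obtain a where a: "a \<in> coords" and xa: "x = coord_prod a" using coord_prod_surj by auto
    have "a \<in> tail_coords (Suc k)"
    proof (rule ccontr)
      let ?P = "\<lambda>j. j \<in> {1..n} \<and> j \<le> n - Suc k \<and> a j \<noteq> 0"
      assume "a \<notin> tail_coords (Suc k)"
      then have "\<exists>j. ?P j" using a by (auto simp: tail_coords_iff)
      then obtain j where j: "?P j" and below: "\<forall>i < j. \<not> ?P i"
        using exists_least_iff[of ?P] by blast
      have low: "\<forall>i \<in> {1..n}. i < j \<longrightarrow> a i = 0" using below j by auto
      have "j \<in> {1..n - 1}" using j kn by auto
      then obtain y where y: "y \<in> carrier (G Mod D)" and lj: "l (Suc j) j y \<noteq> 0" using nz by blast
      then obtain s where s: "s \<in> y" "s \<in> carrier G"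
        using rcos_in_Mod by (auto simp: carrier_FactGroup RCOSETS_def)
      have "inv s \<otimes> x \<otimes> s \<otimes> inv x \<in> tail_span k" using x s(2) IH by auto
      then have "coord_prod (reduce (comm_coords y a)) \<in> tail_span k"
        unfolding xa commutator_coords[OF y s(1)] .
      then obtain b where b: "b \<in> tail_coords k" "coord_prod (reduce (comm_coords y a)) = coord_prod b"
        unfolding tail_span_def by blast
      then have "reduce (comm_coords y a) = b"
        using coord_prod_inj reduce_in_coords by (simp add: tail_coords_iff)
      then have "reduce (comm_coords y a) (Suc j) = 0"
        using b(1) j kn by (auto simp: tail_coords_iff)
      moreover have "reduce (comm_coords y a) (Suc j) \<noteq> 0"
        using lowest_coord_survives[OF a low _ _ lj] j kn by auto
      ultimately show False by contradiction
    qed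
    then show "x \<in> tail_span (Suc k)" using xa by (auto simp: tail_span_def)
  qed
qed

lemma chain_escapes_tail_span:
  assumes j: "j \<in> {1..n - 1}" and z: "\<forall>y \<in> carrier (G Mod D). l (Suc j) j y = 0"
  shows "g j \<in> chain (n - j)" and "g j \<notin> tail_span (n - j)"
proof -
  have jn: "j \<in> {1..n}" using j by auto
  have g: "g j = coord_prod (unit_coords j)" by (rule g_eq_unit_coords[OF jn])
  show "g j \<notin> tail_span (n - j)"
  proof
    assume "g j \<in> tail_span (n - j)"
    then obtain b where b: "b \<in> tail_coords (n - j)" "coord_prod (unit_coords j) = coord_prod b"
      using g by (auto simp: tail_span_def)
    then have "unit_coords j = b"
      using coord_prod_inj unit_coords_in_coords by (simp add: tail_coords_iff)
    then show False using b(1) jn by (auto simp: tail_coords_iff unit_coords_def)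
  qed
  define m where "m = n - j - 1"
  have m: "n - j = Suc m" using j by (auto simp: m_def)
  have low: "\<forall>i \<in> {1..n}. i < j \<longrightarrow> unit_coords j i = 0" by (simp add: unit_coords_def)
  have "inv s \<otimes> g j \<otimes> s \<otimes> inv (g j) \<in> chain m" if s: "s \<in> carrier G" for s
  proof -
    have y: "D #> s \<in> carrier (G Mod D)" and sy: "s \<in> D #> s" using rcos_in_Mod[OF s] by auto
    have "comm_coords (D #> s) (unit_coords j) k = 0" if k: "k \<le> n - m" for k
    proof (cases "k \<le> j")
      case True then show ?thesis using low by (intro comm_coords_vanish) auto
    next
      case False
      then have "k = Suc j" using k m by auto
      then show ?thesis using comm_coords_lowest[OF low jn] z y by simp
    qed
    then have "reduce (comm_coords (D #> s) (unit_coords j)) \<in> tail_coords m"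
      by (intro reduce_in_tail_coords) auto
    then have "coord_prod (reduce (comm_coords (D #> s) (unit_coords j))) \<in> chain m"
      using tail_span_subset_chain[of m] unfolding tail_span_def by blast
    then show ?thesis unfolding g commutator_coords[OF y sy] .
  qed
  then show "g j \<in> chain (n - j)" using m g_in_D[OF jn] by simp
qed

text \<open>Statement (2) iff (3), in terms of the commutator chain.\<close>
theorem chain_eq_tail_span_iff:
  "(\<forall>i \<in> {1..n}. chain i = tail_span i) \<longleftrightarrow>
   (\<forall>j \<in> {1..n - 1}. \<exists>y \<in> carrier (G Mod D). l (Suc j) j y \<noteq> 0)"
proof
  assume eq: "\<forall>i \<in> {1..n}. chain i = tail_span i"
  show "\<forall>j \<in> {1..n - 1}. \<exists>y \<in> carrier (G Mod D). l (Suc j) j y \<noteq> 0"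
  proof (rule ballI, rule ccontr)
    fix j assume j: "j \<in> {1..n - 1}" and "\<not> (\<exists>y \<in> carrier (G Mod D). l (Suc j) j y \<noteq> 0)"
    then have z: "\<forall>y \<in> carrier (G Mod D). l (Suc j) j y = 0" by blast
    have "n - j \<in> {1..n}" using j by auto
    then have "chain (n - j) = tail_span (n - j)" using eq by blast
    then show False using chain_escapes_tail_span[OF j z] by simp
  qed
next
  assume nz: "\<forall>j \<in> {1..n - 1}. \<exists>y \<in> carrier (G Mod D). l (Suc j) j y \<noteq> 0"
  show "\<forall>i \<in> {1..n}. chain i = tail_span i"
  proof
    fix i assume "i \<in> {1..n}"
    then have "chain i \<subseteq> tail_span i" using chain_subset_tail_span[OF nz, of i] by simp
    then show "chain i = tail_span i" using tail_span_subset_chain[of i] by (rule subset_antisym)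
  qed
qed

text \<open>Since the tail spans always lie in the chain and have order p^i, equality can be
  detected by counting.\<close>
theorem chain_card_iff:
  "(\<forall>i \<in> {1..n}. card (chain i) = p ^ i) \<longleftrightarrow> (\<forall>i \<in> {1..n}. chain i = tail_span i)"
proof -
  have "finite (chain (Suc k))" for k by (rule finite_subset[OF _ D_finite]) auto
  then have fin: "finite (chain i)" if "i \<in> {1..n}" for i
    using that by (cases i) auto
  show ?thesis
  proof
    assume card: "\<forall>i \<in> {1..n}. card (chain i) = p ^ i"
    show "\<forall>i \<in> {1..n}. chain i = tail_span i"
    proof
      fix i assume i: "i \<in> {1..n}"
      then have "card (tail_span i) = card (chain i)" using card card_tail_span by simp
      then show "chain i = tail_span i"
        using card_subset_eq[OF fin[OF i] tail_span_subset_chain] by simp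
    qed
  qed (simp add: card_tail_span)
qed

end

lemma stepwise_power_iff:
  fixes f :: "nat \<Rightarrow> nat" assumes f0: "f 0 = 1"
  shows "(\<forall>i \<in> {1..n}. f i = p * f (i - 1)) \<longleftrightarrow> (\<forall>i \<in> {1..n}. f i = p ^ i)"
proof
  assume step: "\<forall>i \<in> {1..n}. f i = p * f (i - 1)"
  have "i \<le> n \<Longrightarrow> f i = p ^ i" for i
  proof (induction i)
    case (Suc i)
    then have "f (Suc i) = p * f i" using step by force
    then show ?case using Suc by simp
  qed (simp add: f0)
  then show "\<forall>i \<in> {1..n}. f i = p ^ i" by simp
next
  assume pow: "\<forall>i \<in> {1..n}. f i = p ^ i"
  show "\<forall>i \<in> {1..n}. f i = p * f (i - 1)"
  proof
    fix i assume i: "i \<in> {1..n}"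
    then obtain m where m: "i = Suc m" by (cases i) auto
    have "f m = p ^ m" using pow f0 m i by (cases m) auto
    then show "f i = p * f (i - 1)" using pow i m by simp
  qed
qed

lemma (in group) comm_chain_mono: "\<one> \<in> D \<Longrightarrow> comm_chain G D k \<subseteq> comm_chain G D (Suc k)"
  by (induction k) auto

lemma (in group) Lambda_factor_iso_iff:
  assumes fin: "finite (derived G (carrier G))" and p: "Factorial_Ring.prime p" and i: "i \<ge> 1"
  shows "(G\<lparr>carrier := Lambda G i\<rparr> Mod Lambda G (i - 1) \<cong> integer_mod_group p)
    \<longleftrightarrow> card (Lambda G i) = p * card (Lambda G (i - 1))"
proof (rule factor_iso_Zp_iff[OF _ _ _ _ p])
  show "subgroup (Lambda G i) G" "Lambda G (i - 1) \<lhd> G"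
    using Lambda_normal_in_derived normal_imp_subgroup by blast+
  show "finite (Lambda G i)" using Lambda_normal_in_derived fin finite_subset by blast
  have "\<one> \<in> derived G (carrier G)"
    using derived_is_subgroup[of "carrier G"] subgroup.one_closed by auto
  then show "Lambda G (i - 1) \<subseteq> Lambda G i"
    using comm_chain_mono[of "derived G (carrier G)" "i - 1"] i by (simp add: Lambda_eq_comm_chain)
qed

theorem proposition5p2:
  fixes G :: "('a, 'b) monoid_scheme" and p n :: nat and g :: "nat \<Rightarrow> 'a"
    and l :: "nat \<Rightarrow> nat \<Rightarrow> 'a set \<Rightarrow> nat"
  assumes grp: "group G"
    and fin: "finite (carrier G)"
    and p_prime: "Factorial_Ring.prime p"
    and pgroup: "\<exists>k. card (carrier G) = p ^ k"
    and D_frattini: "derived G (carrier G) = frattini G"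
    and D_abelian: "\<forall>x \<in> derived G (carrier G). \<forall>y \<in> derived G (carrier G). x \<otimes>\<^bsub>G\<^esub> y = y \<otimes>\<^bsub>G\<^esub> x"
    and D_exp: "\<forall>x \<in> derived G (carrier G). x [^]\<^bsub>G\<^esub> p = \<one>\<^bsub>G\<^esub>"
    and D_card: "card (derived G (carrier G)) = p ^ n"
    and n_pos: "n \<ge> 1"
    and basis: "fp_basis G p (derived G (carrier G)) n g"
    and l_range: "\<forall>i j y. l i j y < p"
    and unitri: "\<forall>y \<in> carrier (G Mod derived G (carrier G)). \<forall>s \<in> y. \<forall>j \<in> {1..n}.
        inv\<^bsub>G\<^esub> s \<otimes>\<^bsub>G\<^esub> g j \<otimes>\<^bsub>G\<^esub> s
          = g j \<otimes>\<^bsub>G\<^esub> ordprod G g (\<lambda>i. l i j y) [Suc j..<Suc n]"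
  shows "((\<forall>i \<in> {1..n}. (G\<lparr>carrier := Lambda G i\<rparr> Mod Lambda G (i - 1)) \<cong> integer_mod_group p)
            \<longleftrightarrow> (\<forall>i \<in> {1..n}. Lambda G i = generate G (g ` {n - i + 1..n})))
       \<and> ((\<forall>i \<in> {1..n}. Lambda G i = generate G (g ` {n - i + 1..n}))
            \<longleftrightarrow> (n = 1 \<or> (n \<ge> 2 \<and> (\<forall>i \<in> {1..n - 1}.
                   \<exists>y \<in> carrier (G Mod derived G (carrier G)). l (Suc i) i y \<noteq> 0))))"
proof -
  interpret group G by (rule grp)
  interpret B: unitriangular_basis G p n g "derived G (carrier G)" l
    by (rule unitriangular_basis.intro[OF grp unitriangular_basis_axioms.intro])
      (rule derived_is_subgroup, simp, fact+)
  have Lambda: "Lambda G = B.chain" by (rule ext, rule Lambda_eq_comm_chain)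
  have "(\<forall>i \<in> {1..n}. G\<lparr>carrier := Lambda G i\<rparr> Mod Lambda G (i - 1) \<cong> integer_mod_group p)
      \<longleftrightarrow> (\<forall>i \<in> {1..n}. card (Lambda G i) = p * card (Lambda G (i - 1)))"
    by (intro ball_cong refl Lambda_factor_iso_iff[OF B.D_finite p_prime]) simp
  also have "\<dots> \<longleftrightarrow> (\<forall>i \<in> {1..n}. card (B.chain i) = p ^ i)"
    unfolding Lambda by (rule stepwise_power_iff) simp
  also have "\<dots> \<longleftrightarrow> (\<forall>i \<in> {1..n}. B.chain i = B.tail_span i)"
    by (rule B.chain_card_iff)
  finally have iso: "(\<forall>i \<in> {1..n}. G\<lparr>carrier := Lambda G i\<rparr> Mod Lambda G (i - 1) \<cong> integer_mod_group p)
      \<longleftrightarrow> (\<forall>i \<in> {1..n}. B.chain i = B.tail_span i)" .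
  have span: "(\<forall>i \<in> {1..n}. Lambda G i = generate G (g ` {n - i + 1..n}))
      \<longleftrightarrow> (\<forall>i \<in> {1..n}. B.chain i = B.tail_span i)"
    by (simp only: Lambda B.tail_span_eq_generate)
  have cond: "(n = 1 \<or> (n \<ge> 2 \<and> (\<forall>i \<in> {1..n - 1}. P i))) \<longleftrightarrow> (\<forall>i \<in> {1..n - 1}. P i)"
    for P :: "nat \<Rightarrow> bool" using n_pos by (cases "n = 1") auto
  show ?thesis
    unfolding iso span cond B.chain_eq_tail_span_iff by (intro conjI refl)
qed

end
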